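(* Let $S$ be a semiring and let $\mathcal{A}=(A,X,Y,\sigma^A,\delta^A,\omega^A)$ be a Mealy-type weighted automaton over $S$. Then there exists a sequential weighted automaton $\mathcal{B}=(B,X,Y,\sigma^B,\mu^B)$ over $S$ such that $[\![\mathcal{A}]\!]_s=[\![\mathcal{B}]\!]$ (as functions $(X\times Y)^*\to S$). Moreover, $\mathcal{B}$ can be chosen with $|B|\le |A|$.
   Context: A semiring $(S,+,\cdot,0,1)$ is a set with $(S,+,0)$ a commutative monoid, $(S,\cdot,1)$ a monoid (not necessarily commutative), $\cdot$ distributing over $+$ on both sides, and $0\cdot s=s\cdot 0=0$. $(X\times Y)^*$ is identified with the set of pairs $(u,v)\in X^*\times Y^*$ with $|u|=|v|$; its empty element is $(\varepsilon,\varepsilon)$. All automata have finite nonempty state set and finite nonempty alphabets $X,Y$. A sequential weighted automaton over $S$ is $\mathcal{B}=(B,X,Y,\sigma,\mu)$ with $\sigma:B\to S$ and $\mu:B\times X\times Y\times B\to S$. Its behavior $[\![\mathcal{B}]\!]:(X\times Y)^*\to S$ is $[\![\mathcal{B}]\!](\varepsilon,\varepsilon)=\sum_{b\in B}\sigma(b)$ and, for $u=x_1\cdots x_n$, $v=y_1\cdots y_n$ ($n\ge1$, $x_i\in X$, $y_i\in Y$), $[\![\mathcal{B}]\!](u,v)=\sum_{(b_0,\dots,b_n)\in B^{n+1}}\sigma(b_0)\cdot\mu(b_0,x_1,y_1,b_1)\cdot\mu(b_1,x_2,y_2,b_2)\cdots\mu(b_{n-1},x_n,y_n,b_n)$. A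 Mealy-type weighted automaton over $S$ is $\mathcal{A}=(A,X,Y,\sigma,\delta,\omega)$ with $\sigma:A\to S$, $\delta:A\times X\times A\to S$, $\omega:A\times X\times Y\to S$; write $\delta_x(a,b)=\delta(a,x,b)$ and $\omega_{x,y}(a)=\omega(a,x,y)$. Its sequential behavior $[\![\mathcal{A}]\!]_s$ is $[\![\mathcal{A}]\!]_s(\varepsilon,\varepsilon)=\sum_{a\in A}\sigma(a)$ and, for $u=x_1\cdots x_n$, $v=y_1\cdots y_n$ with $n\ge 1$, $[\![\mathcal{A}]\!]_s(u,v)=\sum_{(a_0,\dots,a_n)\in A^{n+1}}\sigma(a_0)\cdot\omega_{x_1,y_1}(a_0)\cdot\delta_{x_1}(a_0,a_1)\cdot\omega_{x_2,y_2}(a_1)\cdot\delta_{x_2}(a_1,a_2)\cdots\omega_{x_n,y_n}(a_{n-1})\cdot\delta_{x_n}(a_{n-1},a_n)$. *)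

theory Defs
  imports Main
begin

(* Semiring: class {semiring_0, monoid_mult} = commutative monoid (plus,0), monoid (times,1),
   two-sided distributivity, 0 absorbing; no commutativity of *, no 0 \<noteq> 1.
   A word in (X \<times> Y)^* is a list w of pairs (x_i, y_i) with x_i \<in> X, y_i \<in> Y. *)

definition state_seqs :: "'a set \<Rightarrow> nat \<Rightarrow> 'a list set" where
  "state_seqs A n = {as. length as = Suc n \<and> set as \<subseteq> A}"

definition seq_beh ::
  "'b set \<Rightarrow> ('b \<Rightarrow> 'S::{semiring_0,monoid_mult}) \<Rightarrow> ('b \<Rightarrow> 'x \<Rightarrow> 'y \<Rightarrow> 'b \<Rightarrow> 'S)
    \<Rightarrow> ('x \<times> 'y) list \<Rightarrow> 'S" where
  "seq_beh B \<sigma> \<mu> w =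
     (\<Sum>bs \<in> state_seqs B (length w).
        \<sigma> (bs ! 0) * prod_list (map (\<lambda>i. \<mu> (bs ! i) (fst (w ! i)) (snd (w ! i)) (bs ! Suc i))
                                  [0..<length w]))"

definition mealy_beh ::
  "'a set \<Rightarrow> ('a \<Rightarrow> 'S::{semiring_0,monoid_mult}) \<Rightarrow> ('a \<Rightarrow> 'x \<Rightarrow> 'a \<Rightarrow> 'S)
    \<Rightarrow> ('a \<Rightarrow> 'x \<Rightarrow> 'y \<Rightarrow> 'S) \<Rightarrow> ('x \<times> 'y) list \<Rightarrow> 'S" where
  "mealy_beh A \<sigma> \<delta> \<omega> w =
     (\<Sum>as \<in> state_seqs A (length w).
        \<sigma> (as ! 0) * prod_list (map (\<lambda>i. \<omega> (as ! i) (fst (w ! i)) (snd (w ! i))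
                                            * \<delta> (as ! i) (fst (w ! i)) (as ! Suc i))
                                  [0..<length w]))"

end

theory Submission
  imports Defs
begin

text \<open>Merging output weight and transition weight into one edge weight
  \<open>\<mu>(a,x,y,b) = \<omega>(a,x,y) \<cdot> \<delta>(a,x,b)\<close> turns a Mealy-type automaton into a sequential one
  on the same states; the order of the factors matters since \<open>\<cdot>\<close> need not commute.\<close>

definition mealy_to_seq ::
  "('a \<Rightarrow> 'x \<Rightarrow> 'a \<Rightarrow> 'S::{semiring_0,monoid_mult}) \<Rightarrow> ('a \<Rightarrow> 'x \<Rightarrow> 'y \<Rightarrow> 'S)
    \<Rightarrow> 'a \<Rightarrow> 'x \<Rightarrow> 'y \<Rightarrow> 'a \<Rightarrow> 'S" where
  "mealy_to_seq \<delta> \<omega> a x y b = \<omega> a x y * \<delta> a x b"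

lemma mealy_beh_eq_seq_beh:
  "mealy_beh A \<sigma> \<delta> \<omega> w = seq_beh A \<sigma> (mealy_to_seq \<delta> \<omega>) w"
  by (simp add: mealy_beh_def seq_beh_def mealy_to_seq_def)

theorem theorem1:
  fixes A :: "'a set" and X :: "'x set" and Y :: "'y set"
    and \<sigma>A :: "'a \<Rightarrow> 'S::{semiring_0,monoid_mult}"
    and \<delta>A :: "'a \<Rightarrow> 'x \<Rightarrow> 'a \<Rightarrow> 'S"
    and \<omega>A :: "'a \<Rightarrow> 'x \<Rightarrow> 'y \<Rightarrow> 'S"
  assumes "finite A" "A \<noteq> {}" "finite X" "X \<noteq> {}" "finite Y" "Y \<noteq> {}"
  shows "\<exists>(B :: 'a set) (\<sigma>B :: 'a \<Rightarrow> 'S) (\<mu>B :: 'a \<Rightarrow> 'x \<Rightarrow> 'y \<Rightarrow> 'a \<Rightarrow> 'S).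
           finite B \<and> B \<noteq> {} \<and> card B \<le> card A \<and>
           (\<forall>w. set w \<subseteq> X \<times> Y \<longrightarrow> mealy_beh A \<sigma>A \<delta>A \<omega>A w = seq_beh B \<sigma>B \<mu>B w)"
proof (intro exI conjI allI impI)
  show "mealy_beh A \<sigma>A \<delta>A \<omega>A w = seq_beh A \<sigma>A (mealy_to_seq \<delta>A \<omega>A) w" for w
    by (rule mealy_beh_eq_seq_beh)
qed (use assms in auto)

end
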